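(* Let $\eta,\lambda>0$ with $\eta\lambda\le\tfrac12$, $x(0)\neq0$, and $x(t+1)=(1-\eta\lambda)x(t)-\eta\nabla L(x(t))$. Let $$I=\{T'\in\mathbb{N}: \forall\,0\le t\le T',\ \|x(t)\|_2^2\le\pi^2\rho\eta\ \text{ and }\ \|\nabla L(\bar x(t))\|_2^2>8\pi^4\rho^2\lambda\eta\}.$$ Suppose $0\in I$. Then $I$ is finite, and with $T:=\max I$ we have $T\le\frac{1}{6\lambda\eta}$ and $$\|x(T+1)\|_2^2\le\frac{2(\pi^2\rho\eta)^2}{\|x(0)\|_2^2}.$$
   Context: $L:\mathbb{R}^d\setminus\{0\}\to\mathbb{R}$ is $C^2$ and scale invariant, i.e. $L(cx)=L(x)$ for all $c>0$, $x\ne0$. $\rho:=\max_{\|x\|_2=1}\|\nabla^2L(x)\|_2>0$ (spectral norm). For $x\neq0$, $\bar x:=x/\|x\|_2$. *)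

theory Defs
  imports "HOL-Analysis.Analysis"
begin

end

theory Submission
  imports Defs
begin

text \<open>Scale invariance makes \<open>\<nabla>L(z)\<close> orthogonal to \<open>z\<close> and homogeneous of degree \<open>-1\<close>.
Hence a step adds \<open>\<eta>\<^sup>2 \<parallel>\<nabla>L(x/\<parallel>x\<parallel>)\<parallel>\<^sup>2 / \<parallel>x\<parallel>\<^sup>2\<close> to \<open>\<parallel>x\<parallel>\<^sup>2\<close>, while weight decay shrinks
\<open>\<parallel>x\<parallel>\<^sup>2\<close> by the factor \<open>(1 - \<eta>\<lambda>)\<^sup>2\<close>. As long as the norm is small and the normalized
gradient is large, the gain exceeds the loss by \<open>6\<pi>\<^sup>2\<rho>\<lambda>\<eta>\<^sup>2\<close>, which bounds the length of
that phase. For the step after it one needs an a priori bound on the gradient on the unit sphere: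
along the great circle from \<open>u\<close> through the direction of \<open>\<nabla>L(u)\<close> to \<open>-u\<close>, a second order
Taylor estimate of \<open>L\<close>, run in both directions, gives \<open>\<parallel>\<nabla>L(u)\<parallel> \<le> \<pi>\<rho>/2\<close>.\<close>

lemma taylor_second_order_bound:
  fixes f f' f'' :: "real \<Rightarrow> real"
  assumes f': "\<And>s. (f has_real_derivative f' s) (at s)"
    and f'': "\<And>s. (f' has_real_derivative f'' s) (at s)"
    and bound: "\<And>s. \<bar>f'' s\<bar> \<le> r" and a: "a > 0"
  shows "\<bar>f a - f 0 - a * f' 0\<bar> \<le> r * a^2 / 2"
proof -
  have "\<forall>m t. m < 2 \<and> 0 \<le> t \<and> t \<le> a \<longrightarrow>
      (([f, f', f''] ! m) has_real_derivative ([f, f', f''] ! Suc m) t) (at t)"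
    using f' f'' by (auto simp: less_2_cases_iff)
  from Maclaurin2[OF a _ this] obtain t
    where "f a = (\<Sum>m<2. ([f, f', f''] ! m) 0 / fact m * a ^ m) + f'' t / fact 2 * a^2"
    by auto
  then have "f a - f 0 - a * f' 0 = f'' t * a^2 / 2"
    by (simp add: eval_nat_numeral)
  also have "\<bar>\<dots>\<bar> \<le> r * a^2 / 2"
    using bound[of t] by (simp add: abs_mult divide_right_mono mult_right_mono)
  finally show ?thesis .
qed

locale scale_invariant =
  fixes L :: "'a::euclidean_space \<Rightarrow> real" and gradL :: "'a \<Rightarrow> 'a"
  assumes L_has_derivative: "z \<noteq> 0 \<Longrightarrow> (L has_derivative (\<lambda>h. gradL z \<bullet> h)) (at z)"
    and L_scaleR: "c > 0 \<Longrightarrow> z \<noteq> 0 \<Longrightarrow> L (c *\<^sub>R z) = L z"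
begin

lemma gradL_orthogonal:
  assumes z: "z \<noteq> 0"
  shows "gradL z \<bullet> z = 0"
proof -
  have "((\<lambda>c. c *\<^sub>R z) has_derivative (\<lambda>h. h *\<^sub>R z)) (at 1)"
    by (auto intro!: derivative_eq_intros)
  then have "((\<lambda>c. L (c *\<^sub>R z)) has_derivative (\<lambda>h. gradL z \<bullet> (h *\<^sub>R z))) (at 1)"
    by (rule has_derivative_compose) (simp add: L_has_derivative z)
  then have "((\<lambda>c. L z) has_derivative (\<lambda>h. gradL z \<bullet> (h *\<^sub>R z))) (at 1)"
    by (rule has_derivative_transform_within_open[where s = "{0<..}"]) (auto simp: L_scaleR z)
  from has_derivative_unique[OF this has_derivative_const]
  show ?thesis by (metis scaleR_one)
qed

lemma gradL_scaleR:
  assumes z: "z \<noteq> 0" and c: "c > 0"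
  shows "gradL (c *\<^sub>R z) = (1 / c) *\<^sub>R gradL z"
proof -
  have "((\<lambda>y. c *\<^sub>R y) has_derivative (\<lambda>h. c *\<^sub>R h)) (at z)"
    by (auto intro!: derivative_eq_intros)
  then have "((\<lambda>y. L (c *\<^sub>R y)) has_derivative (\<lambda>h. gradL (c *\<^sub>R z) \<bullet> (c *\<^sub>R h))) (at z)"
    by (rule has_derivative_compose) (use L_has_derivative[of "c *\<^sub>R z"] z c in simp)
  then have "(L has_derivative (\<lambda>h. gradL (c *\<^sub>R z) \<bullet> (c *\<^sub>R h))) (at z)"
    by (rule has_derivative_transform_within_open[where s = "UNIV - {0}"]) (auto simp: L_scaleR c z)
  from has_derivative_unique[OF this L_has_derivative[OF z]]
  have "gradL (c *\<^sub>R z) \<bullet> (c *\<^sub>R h) = gradL z \<bullet> h" for h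
    by metis
  then have "(c *\<^sub>R gradL (c *\<^sub>R z) - gradL z) \<bullet> h = 0" for h
    by (simp add: inner_diff_left)
  then have "c *\<^sub>R gradL (c *\<^sub>R z) = gradL z"
    by (metis inner_eq_zero_iff right_minus_eq)
  then have "(1 / c) *\<^sub>R (c *\<^sub>R gradL (c *\<^sub>R z)) = (1 / c) *\<^sub>R gradL z"
    by simp
  then show ?thesis using c by simp
qed

lemma norm_sq_gradient_step:
  assumes z: "z \<noteq> 0"
  shows "norm (a *\<^sub>R z - \<eta> *\<^sub>R gradL z)^2
    = a^2 * norm z^2 + \<eta>^2 * norm (gradL ((1 / norm z) *\<^sub>R z))^2 / norm z^2"
proof -
  have "norm (gradL ((1 / norm z) *\<^sub>R z)) = norm z * norm (gradL z)"
    using gradL_scaleR[OF z, of "1 / norm z"] z by simp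
  moreover have "gradL z \<bullet> z = 0" by (rule gradL_orthogonal[OF z])
  ultimately show ?thesis
    using z by (simp add: power2_norm_eq_inner inner_diff_left inner_diff_right inner_commute
        power_mult_distrib)
      (simp add: power2_eq_square)
qed

end

locale scale_invariant_hessian_bounded = scale_invariant +
  fixes H :: "'a::euclidean_space \<Rightarrow> 'a \<Rightarrow>\<^sub>L 'a" and \<rho> :: real
  assumes gradL_has_derivative: "z \<noteq> 0 \<Longrightarrow> (gradL has_derivative blinfun_apply (H z)) (at z)"
    and norm_H_le: "norm z = 1 \<Longrightarrow> norm (H z) \<le> \<rho>"
begin

lemma great_circle_taylor:
  assumes u: "norm u = 1" and w: "norm w = 1" and uw: "u \<bullet> w = 0"
  shows "\<bar>L (- u) - L u - pi * (gradL u \<bullet> w)\<bar> \<le> \<rho> * pi^2 / 2"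
proof -
  define \<gamma> where "\<gamma> s = cos s *\<^sub>R u + sin s *\<^sub>R w" for s
  define \<gamma>' where "\<gamma>' s = (- sin s) *\<^sub>R u + cos s *\<^sub>R w" for s
  have unit: "norm (cos s *\<^sub>R u + sin s *\<^sub>R w) = 1" for s
    using u w uw by (simp add: norm_eq_1 inner_add_left inner_add_right inner_commute
        power2_eq_square[symmetric])
  have \<gamma>_unit: "norm (\<gamma> s) = 1" and \<gamma>'_unit: "norm (\<gamma>' s) = 1" for s
    using unit[of s] unit[of "s + pi / 2"] by (simp_all add: \<gamma>_def \<gamma>'_def cos_add sin_add)
  have \<gamma>_nonzero: "\<gamma> s \<noteq> 0" for s
    using \<gamma>_unit[of s] by auto
  have d\<gamma>: "(\<gamma> has_derivative (\<lambda>h. h *\<^sub>R \<gamma>' s)) (at s)"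
    and d\<gamma>': "(\<gamma>' has_derivative (\<lambda>h. h *\<^sub>R - \<gamma> s)) (at s)" for s
    unfolding \<gamma>_def \<gamma>'_def has_vector_derivative_def[symmetric]
    by (auto intro!: derivative_eq_intros simp: algebra_simps)
  have "((\<lambda>s. L (\<gamma> s)) has_real_derivative gradL (\<gamma> s) \<bullet> \<gamma>' s) (at s)" for s
    using has_derivative_compose[OF d\<gamma>[of s] L_has_derivative[OF \<gamma>_nonzero[of s]]]
    by (simp add: has_field_derivative_def mult_commute_abs)
  moreover have "((\<lambda>s. gradL (\<gamma> s) \<bullet> \<gamma>' s) has_real_derivative H (\<gamma> s) (\<gamma>' s) \<bullet> \<gamma>' s) (at s)"
    for s
    \<comment> \<open>the term \<open>\<nabla>L(\<gamma>) \<bullet> \<gamma>'' = - \<nabla>L(\<gamma>) \<bullet> \<gamma>\<close> vanishes by orthogonality\<close>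
    using has_derivative_inner[OF has_derivative_compose[OF d\<gamma>[of s]
        gradL_has_derivative[OF \<gamma>_nonzero[of s]]] d\<gamma>'[of s]]
    by (simp add: has_field_derivative_def blinfun.scaleR_right gradL_orthogonal[OF \<gamma>_nonzero[of s]]
        mult_commute_abs)
  moreover have "\<bar>H (\<gamma> s) (\<gamma>' s) \<bullet> \<gamma>' s\<bar> \<le> \<rho>" for s
  proof -
    have "\<bar>H (\<gamma> s) (\<gamma>' s) \<bullet> \<gamma>' s\<bar> \<le> norm (H (\<gamma> s)) * norm (\<gamma>' s) * norm (\<gamma>' s)"
      by (metis Cauchy_Schwarz_ineq2 norm_blinfun norm_ge_zero mult_right_mono order_trans)
    then show ?thesis using norm_H_le[OF \<gamma>_unit[of s]] \<gamma>'_unit[of s] by simp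
  qed
  ultimately have "\<bar>L (\<gamma> pi) - L (\<gamma> 0) - pi * (gradL (\<gamma> 0) \<bullet> \<gamma>' 0)\<bar> \<le> \<rho> * pi^2 / 2"
    by (rule taylor_second_order_bound) simp
  then show ?thesis by (simp add: \<gamma>_def \<gamma>'_def)
qed

lemma norm_gradL_le:
  assumes u: "norm u = 1"
  shows "norm (gradL u) \<le> pi * \<rho> / 2"
proof (cases "gradL u = 0")
  case True
  have "0 \<le> \<rho>" using norm_H_le[OF u] norm_ge_zero[of "H u"] by linarith
  then show ?thesis using True by simp
next
  case False
  define v where "v = (1 / norm (gradL u)) *\<^sub>R gradL u"
  have v: "norm v = 1" "norm (- v) = 1" using False by (simp_all add: v_def)
  have "u \<noteq> 0" using u by auto
  then have "u \<bullet> v = 0" "u \<bullet> - v = 0"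
    using gradL_orthogonal[of u] by (auto simp: v_def inner_commute)
  moreover have "gradL u \<bullet> v = norm (gradL u)"
    using False by (simp add: v_def power2_norm_eq_inner[symmetric] power2_eq_square)
  ultimately have "\<bar>L (- u) - L u - pi * norm (gradL u)\<bar> \<le> \<rho> * pi^2 / 2"
    and "\<bar>L (- u) - L u + pi * norm (gradL u)\<bar> \<le> \<rho> * pi^2 / 2"
    using great_circle_taylor[OF u v(1)] great_circle_taylor[OF u v(2)] by simp_all
  then have "pi * norm (gradL u) * 2 \<le> \<rho> * pi^2"
    unfolding abs_le_iff by linarith
  then show ?thesis by (simp add: power2_eq_square field_simps)
qed

end

locale weight_decay_gradient_descent = scale_invariant_hessian_bounded +
  fixes \<eta> lam :: real and x :: "nat \<Rightarrow> 'a::euclidean_space"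
  assumes rho_pos: "\<rho> > 0" and eta_pos: "\<eta> > 0" and lam_pos: "lam > 0"
    and step_small: "\<eta> * lam \<le> 1 / 2"
    and x0_nonzero: "x 0 \<noteq> 0"
    and x_Suc: "x (Suc t) = (1 - \<eta> * lam) *\<^sub>R x t - \<eta> *\<^sub>R gradL (x t)"
begin

definition growth_phase :: "nat set" where
  "growth_phase = {T'. \<forall>t\<le>T'. norm (x t)^2 \<le> pi^2 * \<rho> * \<eta>
     \<and> norm (gradL ((1 / norm (x t)) *\<^sub>R x t))^2 > 8 * pi^4 * \<rho>^2 * lam * \<eta>}"

lemma x_nonzero: "x t \<noteq> 0"
proof (induction t)
  case 0
  show ?case by (rule x0_nonzero)
next
  case (Suc t)
  have "0 < (1 - \<eta> * lam)^2 * norm (x t)^2"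
    using Suc step_small by simp
  also have "\<dots> \<le> norm (x (Suc t))^2"
    by (simp add: x_Suc norm_sq_gradient_step[OF Suc])
  finally show ?case by auto
qed

lemma norm_sq_x_Suc:
  "norm (x (Suc t))^2 = (1 - \<eta> * lam)^2 * norm (x t)^2
     + \<eta>^2 * norm (gradL ((1 / norm (x t)) *\<^sub>R x t))^2 / norm (x t)^2"
  by (simp add: x_Suc norm_sq_gradient_step[OF x_nonzero])

lemma norm_sq_x_Suc_ge:
  assumes small: "norm (x t)^2 \<le> pi^2 * \<rho> * \<eta>"
    and large: "norm (gradL ((1 / norm (x t)) *\<^sub>R x t))^2 > 8 * pi^4 * \<rho>^2 * lam * \<eta>"
  shows "norm (x t)^2 + 6 * pi^2 * \<rho> * lam * \<eta>^2 \<le> norm (x (Suc t))^2"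
proof -
  have pos: "norm (x t)^2 > 0" using x_nonzero by simp
  have "(1 - 2 * \<eta> * lam) * norm (x t)^2 \<le> (1 - \<eta> * lam)^2 * norm (x t)^2"
    using zero_le_power2[of "\<eta> * lam"]
    by (intro mult_right_mono) (simp_all add: power2_eq_square algebra_simps)
  moreover have "2 * \<eta> * lam * norm (x t)^2 \<le> 2 * pi^2 * \<rho> * lam * \<eta>^2"
    using mult_left_mono[OF small, of "2 * \<eta> * lam"] eta_pos lam_pos
    by (simp add: power2_eq_square mult_ac)
  moreover have "8 * pi^2 * \<rho> * lam * \<eta>^2
      \<le> \<eta>^2 * norm (gradL ((1 / norm (x t)) *\<^sub>R x t))^2 / norm (x t)^2"
  proof -
    have "8 * pi^2 * \<rho> * lam * \<eta>^2 = \<eta>^2 * (8 * pi^4 * \<rho>^2 * lam * \<eta>) / (pi^2 * \<rho> * \<eta>)"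
      using rho_pos eta_pos by (simp add: field_simps power2_eq_square power4_eq_xxxx)
    also have "\<dots> \<le> \<eta>^2 * norm (gradL ((1 / norm (x t)) *\<^sub>R x t))^2 / norm (x t)^2"
      using small large pos rho_pos eta_pos lam_pos
      by (intro frac_le mult_left_mono) auto
    finally show ?thesis .
  qed
  ultimately show ?thesis
    unfolding norm_sq_x_Suc by (simp add: algebra_simps)
qed

lemma norm_sq_x_growth_phase:
  assumes "T' \<in> growth_phase" and "t \<le> T'"
  shows "norm (x 0)^2 + real t * (6 * pi^2 * \<rho> * lam * \<eta>^2) \<le> norm (x t)^2"
  using assms(2)
proof (induction t)
  case (Suc t)
  then have "norm (x t)^2 \<le> pi^2 * \<rho> * \<eta>"
    and "norm (gradL ((1 / norm (x t)) *\<^sub>R x t))^2 > 8 * pi^4 * \<rho>^2 * lam * \<eta>"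
    using assms(1) by (auto simp: growth_phase_def)
  from norm_sq_x_Suc_ge[OF this] Suc show ?case by (simp add: algebra_simps)
qed simp

lemma growth_phase_le:
  assumes "T' \<in> growth_phase"
  shows "real T' \<le> 1 / (6 * lam * \<eta>)"
proof -
  have "norm (x T')^2 \<le> pi^2 * \<rho> * \<eta>"
    using assms by (simp add: growth_phase_def)
  then have "real T' * (6 * pi^2 * \<rho> * lam * \<eta>^2) \<le> pi^2 * \<rho> * \<eta>"
    using norm_sq_x_growth_phase[OF assms order_refl] zero_le_power2[of "norm (x 0)"] by linarith
  then have "real T' \<le> pi^2 * \<rho> * \<eta> / (6 * pi^2 * \<rho> * lam * \<eta>^2)"
    using rho_pos eta_pos lam_pos by (simp add: pos_le_divide_eq)
  also have "\<dots> = 1 / (6 * lam * \<eta>)"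
    using rho_pos eta_pos by (simp add: power2_eq_square)
  finally show ?thesis .
qed

lemma finite_growth_phase: "finite growth_phase"
proof (rule finite_subset)
  show "growth_phase \<subseteq> {..nat \<lceil>1 / (6 * lam * \<eta>)\<rceil>}"
  proof
    fix T' assume "T' \<in> growth_phase"
    from growth_phase_le[OF this] show "T' \<in> {..nat \<lceil>1 / (6 * lam * \<eta>)\<rceil>}"
      by (simp add: le_nat_iff) linarith
  qed
qed simp

lemma norm_sq_x_Suc_le:
  assumes "norm (x 0)^2 \<le> norm (x t)^2"
  shows "norm (x (Suc t))^2 \<le> norm (x t)^2 + (pi * \<rho> * \<eta> / 2)^2 / norm (x 0)^2"
proof -
  have "(1 - \<eta> * lam)^2 * norm (x t)^2 \<le> norm (x t)^2"
    using step_small eta_pos lam_pos by (intro mult_left_le_one_le) (auto simp: power_le_one)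
  moreover have "\<eta>^2 * norm (gradL ((1 / norm (x t)) *\<^sub>R x t))^2 / norm (x t)^2
      \<le> (pi * \<rho> * \<eta> / 2)^2 / norm (x 0)^2"
  proof (rule frac_le)
    have "norm (gradL ((1 / norm (x t)) *\<^sub>R x t)) \<le> pi * \<rho> / 2"
      using x_nonzero by (intro norm_gradL_le) simp
    then have "(\<eta> * norm (gradL ((1 / norm (x t)) *\<^sub>R x t)))^2 \<le> (pi * \<rho> * \<eta> / 2)^2"
      using eta_pos by (intro power_mono) (simp_all add: mult_ac)
    then show "\<eta>^2 * norm (gradL ((1 / norm (x t)) *\<^sub>R x t))^2 \<le> (pi * \<rho> * \<eta> / 2)^2"
      by (simp add: power_mult_distrib)
  qed (use assms x_nonzero in simp_all)
  ultimately show ?thesis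
    unfolding norm_sq_x_Suc by linarith
qed

lemma norm_sq_x_after_growth_phase:
  assumes "0 \<in> growth_phase"
  shows "norm (x (Max growth_phase + 1))^2 \<le> 2 * (pi^2 * \<rho> * \<eta>)^2 / norm (x 0)^2"
proof -
  define T where "T = Max growth_phase"
  have T: "T \<in> growth_phase"
    unfolding T_def using assms finite_growth_phase by (intro Max_in) auto
  have n0: "0 < norm (x 0)^2" "norm (x 0)^2 \<le> pi^2 * \<rho> * \<eta>"
    using assms x0_nonzero by (auto simp: growth_phase_def)
  have "0 \<le> real T * (6 * pi^2 * \<rho> * lam * \<eta>^2)"
    using rho_pos eta_pos lam_pos by simp
  then have "norm (x 0)^2 \<le> norm (x T)^2"
    using norm_sq_x_growth_phase[OF T order_refl] by linarith
  then have "norm (x (T + 1))^2 \<le> norm (x T)^2 + (pi * \<rho> * \<eta> / 2)^2 / norm (x 0)^2"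
    by (simp add: norm_sq_x_Suc_le)
  moreover have "norm (x T)^2 \<le> pi^2 * \<rho> * \<eta>"
    using T by (simp add: growth_phase_def)
  moreover have "pi^2 * \<rho> * \<eta> \<le> (pi^2 * \<rho> * \<eta>)^2 / norm (x 0)^2"
    using n0 rho_pos eta_pos by (simp add: pos_le_divide_eq power2_eq_square mult_left_mono)
  moreover have "(pi * \<rho> * \<eta> / 2)^2 / norm (x 0)^2 \<le> (pi^2 * \<rho> * \<eta>)^2 / norm (x 0)^2"
  proof (rule divide_right_mono)
    have "pi / 2 \<le> pi^2" using pi_gt3 by (simp add: power2_eq_square)
    then show "(pi * \<rho> * \<eta> / 2)^2 \<le> (pi^2 * \<rho> * \<eta>)^2"
      using rho_pos eta_pos by (intro power_mono) (auto simp: mult_right_mono)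
  qed simp
  moreover have "2 * (pi^2 * \<rho> * \<eta>)^2 / norm (x 0)^2
      = (pi^2 * \<rho> * \<eta>)^2 / norm (x 0)^2 + (pi^2 * \<rho> * \<eta>)^2 / norm (x 0)^2"
    by simp
  ultimately show ?thesis
    unfolding T_def by linarith
qed

end

theorem mainTheorem11:
  fixes L :: "'a::euclidean_space \<Rightarrow> real"
    and gradL :: "'a \<Rightarrow> 'a"
    and H :: "'a \<Rightarrow> ('a \<Rightarrow>\<^sub>L 'a)"
    and \<rho> \<eta> lam :: real
    and x :: "nat \<Rightarrow> 'a"
  assumes grad: "\<And>z. z \<noteq> 0 \<Longrightarrow> (L has_derivative (\<lambda>h. gradL z \<bullet> h)) (at z)"
    and hess: "\<And>z. z \<noteq> 0 \<Longrightarrow> (gradL has_derivative blinfun_apply (H z)) (at z)"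
    and hess_cont: "continuous_on (UNIV - {0}) H"
    and scale_inv: "\<And>c z. c > 0 \<Longrightarrow> z \<noteq> 0 \<Longrightarrow> L (c *\<^sub>R z) = L z"
    and rho_max: "\<exists>z\<in>sphere 0 1. norm (H z) = \<rho>"
    and rho_ub: "\<And>z. z \<in> sphere 0 1 \<Longrightarrow> norm (H z) \<le> \<rho>"
    and rho_pos: "\<rho> > 0"
    and eta_pos: "\<eta> > 0" and lambda_pos: "lam > 0"
    and step_small: "\<eta> * lam \<le> 1/2"
    and x0: "x 0 \<noteq> 0"
    and iter: "\<And>t. x (Suc t) = (1 - \<eta> * lam) *\<^sub>R x t - \<eta> *\<^sub>R gradL (x t)"
    and zero_in: "0 \<in> {T'::nat. \<forall>t\<le>T'. norm (x t) ^ 2 \<le> pi^2 * \<rho> * \<eta>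
                     \<and> norm (gradL ((1 / norm (x t)) *\<^sub>R x t)) ^ 2 > 8 * pi^4 * \<rho>^2 * lam * \<eta>}"
  shows "let I = {T'::nat. \<forall>t\<le>T'. norm (x t) ^ 2 \<le> pi^2 * \<rho> * \<eta>
                     \<and> norm (gradL ((1 / norm (x t)) *\<^sub>R x t)) ^ 2 > 8 * pi^4 * \<rho>^2 * lam * \<eta>};
             T = Max I
         in finite I \<and> real T \<le> 1 / (6 * lam * \<eta>)
            \<and> norm (x (T + 1)) ^ 2 \<le> 2 * (pi^2 * \<rho> * \<eta>)^2 / norm (x 0) ^ 2"
proof -
  interpret weight_decay_gradient_descent L gradL H \<rho> \<eta> lam x
    by unfold_locales (use assms in auto)
  have "0 \<in> growth_phase" using zero_in by (simp add: growth_phase_def)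
  then have "Max growth_phase \<in> growth_phase"
    using finite_growth_phase by (intro Max_in) auto
  then show ?thesis
    unfolding Let_def growth_phase_def[symmetric]
    using finite_growth_phase growth_phase_le norm_sq_x_after_growth_phase \<open>0 \<in> growth_phase\<close>
    by simp
qed

end
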